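(* If $f\in\mathcal{C}$, then $0\le \det T_{3,1}(f)\le 1$, and both bounds are sharp.
   Context: $\mathbb{D}=\{z\in\mathbb{C}:|z|<1\}$. $\mathcal{A}$ is the class of analytic functions $f$ on $\mathbb{D}$ with $f(0)=0$, $f'(0)=1$, written $f(z)=z+a_2z^2+a_3z^3+\cdots$. $\mathcal{C}=\{f\in\mathcal{A}: \mathrm{Re}[1+zf''(z)/f'(z)]>0 \text{ for all } z\in\mathbb{D}\}$ is the class of convex functions. For $f\in\mathcal{A}$, $\det T_{3,1}(f)=2\,\mathrm{Re}(a_2^2\overline{a_3})-2|a_2|^2-|a_3|^2+1$ is the determinant of the Hermitian Toeplitz matrix $\begin{pmatrix}1&a_2&a_3\\ \overline{a_2}&1&a_2\\ \overline{a_3}&\overline{a_2}&1\end{pmatrix}$. *)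

theory Defs
  imports "HOL-Analysis.Analysis"
begin

definition unit_disc :: "complex set" where
  "unit_disc = ball 0 1"

definition taylor_coeff :: "(complex \<Rightarrow> complex) \<Rightarrow> nat \<Rightarrow> complex" where
  "taylor_coeff f n = (deriv ^^ n) f 0 / of_nat (fact n)"

definition class_A :: "(complex \<Rightarrow> complex) set" where
  "class_A = {f. f holomorphic_on unit_disc \<and> f 0 = 0 \<and> deriv f 0 = 1}"

text \<open>Class C of convex functions: Re(1 + z f''(z)/f'(z)) > 0 on the disc
  (the quotient being defined, i.e. f' nonvanishing).\<close>
definition class_C :: "(complex \<Rightarrow> complex) set" where
  "class_C = {f \<in> class_A. \<forall>z\<in>unit_disc. deriv f z \<noteq> 0 \<and>
      Re (1 + z * deriv (deriv f) z / deriv f z) > 0}"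

definition detT31 :: "(complex \<Rightarrow> complex) \<Rightarrow> real" where
  "detT31 f = (let a2 = taylor_coeff f 2; a3 = taylor_coeff f 3 in
     2 * Re (a2^2 * cnj a3) - 2 * (cmod a2)^2 - (cmod a3)^2 + 1)"

end

theory Submission
  imports Defs "HOL-Complex_Analysis.Complex_Analysis"
begin

text \<open>If f is convex, p = 1 + z f''/f' has positive real part, so its Cayley transform
  (p - 1)/(p + 1) = z f''/(2 f' + z f'') is a self-map of the disc fixing 0. Hence it equals
  z g(z) with g(0) = a2 and g'(0) = 3 (a3 - a2^2), and the Schwarz-Pick lemma at the origin gives
  3 |a3 - a2^2| <= 1 - |a2|^2. As det T31(f) = (1 - |a2|^2)^2 - |a3 - a2^2|^2, the determinant
  lies in [0, 1]. The identity attains 1, and z/(1 - z), all of whose coefficients are 1,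
  attains 0.\<close>

lemma norm_Cayley_less_1:
  fixes p :: complex
  assumes "Re p > 0"
  shows "norm ((p - 1) / (p + 1)) < 1"
proof -
  have "(norm (p - 1))^2 < (norm (p + 1))^2"
    using assms unfolding cmod_power2 by (simp add: power2_eq_square algebra_simps)
  then have "norm (p - 1) < norm (p + 1)" by (rule power2_less_imp_less) simp
  then show ?thesis by (simp add: norm_divide divide_less_eq)
qed

lemma Re_inverse_Cayley_pos:
  fixes z :: complex
  assumes "norm z < 1"
  shows "Re ((1 + z) / (1 - z)) > 0"
proof -
  have "Re ((1 + z) / (1 - z)) = (1 - (norm z)^2) / (norm (1 - z))^2"
    unfolding cmod_power2 by (simp add: Re_divide power2_eq_square algebra_simps)
  moreover have "(norm z)^2 < 1" using assms by (simp add: power_less_one_iff)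
  moreover have "z \<noteq> 1" using assms by auto
  ultimately show ?thesis by simp
qed

lemma Schwarz_Pick_deriv_0:
  assumes holg: "g holomorphic_on ball 0 1"
    and lt: "\<And>z. norm z < 1 \<Longrightarrow> norm (g z) < 1"
  shows "norm (deriv g 0) \<le> 1 - (norm (g 0))^2"
proof -
  define a where "a = g 0"
  have a: "norm a < 1" using lt by (simp add: a_def)
  define G where "G = Moebius_function 0 a \<circ> g"
  have "G holomorphic_on ball 0 1"
    unfolding G_def using lt
    by (intro holomorphic_on_compose_gen[OF holg Moebius_function_holomorphic[OF a]]) auto
  moreover have "G 0 = 0" by (simp add: G_def a_def Moebius_function_eq_zero)
  moreover have "norm (G z) < 1" if "norm z < 1" for z
    using Moebius_function_norm_lt_1[OF a lt[OF that]] by (simp add: G_def)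
  ultimately have "norm (deriv G 0) \<le> 1" by (rule Schwarz_Lemma(2)[where \<xi> = 0]) simp_all
  have den: "1 - cnj a * a = of_real (1 - (norm a)^2)"
    using complex_norm_square[of a] by (simp add: mult.commute)
  have "1 - (norm a)^2 > 0" using a by (simp add: power_less_one_iff)
  then have nz: "1 - cnj a * a \<noteq> 0" and norm_den: "norm (1 - cnj a * a) = 1 - (norm a)^2"
    unfolding den of_real_eq_0_iff norm_of_real by auto
  have "(Moebius_function 0 a has_field_derivative 1 / (1 - cnj a * a)) (at a)"
    unfolding Moebius_function_simple[abs_def] using nz
    by (auto intro!: derivative_eq_intros simp: power2_eq_square)
  moreover have "(g has_field_derivative deriv g 0) (at 0)"
    using holg by (intro holomorphic_derivI[of _ "ball 0 1"]) auto
  ultimately have "(G has_field_derivative deriv g 0 / (1 - cnj a * a)) (at 0)"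
    unfolding G_def a_def by (auto dest: DERIV_chain)
  then have "deriv g 0 = deriv G 0 * (1 - cnj a * a)"
    using nz by (simp add: DERIV_imp_deriv)
  then have "norm (deriv g 0) = norm (deriv G 0) * (1 - (norm a)^2)"
    by (simp add: norm_mult norm_den)
  also have "\<dots> \<le> 1 - (norm a)^2"
    using \<open>norm (deriv G 0) \<le> 1\<close> \<open>1 - (norm a)^2 > 0\<close> by (simp add: mult_left_le_one_le)
  finally show ?thesis by (simp add: a_def)
qed

lemma Schwarz_Lemma_div_z:
  assumes holg: "g holomorphic_on ball 0 1"
    and lt: "\<And>z. norm z < 1 \<Longrightarrow> norm (z * g z) < 1"
  obtains "\<forall>z. norm z < 1 \<longrightarrow> norm (g z) < 1"
    | \<alpha> where "norm \<alpha> = 1" and "\<forall>z. norm z < 1 \<longrightarrow> g z = \<alpha>"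
proof -
  define w where "w = (\<lambda>z. z * g z)"
  have holw: "w holomorphic_on ball 0 1" unfolding w_def by (intro holomorphic_intros holg)
  have w0: "w 0 = 0" by (simp add: w_def)
  have w_lt: "\<And>z. norm z < 1 \<Longrightarrow> norm (w z) < 1" using lt by (simp add: w_def)
  have "(g has_field_derivative deriv g 0) (at 0)"
    using holg by (intro holomorphic_derivI[of _ "ball 0 1"]) auto
  then have "(w has_field_derivative g 0) (at 0)"
    unfolding w_def by (auto intro!: derivative_eq_intros)
  then have dw0: "deriv w 0 = g 0"
    by (rule DERIV_imp_deriv)
  show ?thesis
  proof (cases "\<forall>z. norm z < 1 \<longrightarrow> norm (g z) < 1")
    case True
    then show ?thesis using that(1) by blast
  next
    case False
    then obtain z0 where z0: "norm z0 < 1" "norm (g z0) \<ge> 1" by (auto simp: not_less)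
    have "(\<exists>z. norm z < 1 \<and> z \<noteq> 0 \<and> norm (w z) = norm z) \<or> norm (deriv w 0) = 1"
    proof (cases "z0 = 0")
      case True
      have "norm (deriv w 0) \<le> 1"
        using Schwarz_Lemma(2)[of w 0] holw w0 w_lt by simp
      then show ?thesis using True z0 dw0 by auto
    next
      case False
      have "norm (w z0) \<le> norm z0"
        using Schwarz_Lemma(1)[of w z0] holw w0 w_lt z0(1) by blast
      then show ?thesis using z0 False by (auto simp: w_def norm_mult)
    qed
    then obtain \<alpha> where \<alpha>: "norm \<alpha> = 1" "\<And>z. norm z < 1 \<Longrightarrow> w z = \<alpha> * z"
      using Schwarz_Lemma(3)[of w 0] holw w0 w_lt by auto
    have "eventually (\<lambda>z. z \<in> ball 0 1) (nhds (0::complex))"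
      by (intro eventually_nhds_in_open) auto
    then have "eventually (\<lambda>z. w z = \<alpha> * z) (nhds 0)"
      by eventually_elim (simp add: \<alpha>(2))
    from deriv_cong_ev[OF this refl] have "g 0 = \<alpha>"
      using dw0 by simp
    then have "g z = \<alpha>" if "norm z < 1" for z
      using \<alpha>(2)[OF that] by (cases "z = 0") (auto simp: w_def mult.commute)
    then show ?thesis using that(2) \<alpha>(1) by blast
  qed
qed

lemma Schwarz_Pick_deriv_0_div_z:
  assumes holg: "g holomorphic_on ball 0 1"
    and lt: "\<And>z. norm z < 1 \<Longrightarrow> norm (z * g z) < 1"
  shows "norm (deriv g 0) \<le> 1 - (norm (g 0))^2"
proof (rule Schwarz_Lemma_div_z[OF holg lt])
  assume "\<forall>z. norm z < 1 \<longrightarrow> norm (g z) < 1"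
  then show ?thesis using Schwarz_Pick_deriv_0[OF holg] by blast
next
  fix \<alpha>
  assume \<alpha>: "norm \<alpha> = 1" "\<forall>z. norm z < 1 \<longrightarrow> g z = \<alpha>"
  have "eventually (\<lambda>z. z \<in> ball 0 1) (nhds (0::complex))"
    by (intro eventually_nhds_in_open) auto
  then have "eventually (\<lambda>z. g z = \<alpha>) (nhds 0)"
    by eventually_elim (use \<alpha>(2) in simp)
  then have "deriv g 0 = 0" by (simp add: deriv_cong_ev)
  then show ?thesis using \<alpha> by simp
qed

definition Schwarz_quotient :: "(complex \<Rightarrow> complex) \<Rightarrow> complex \<Rightarrow> complex" where
  "Schwarz_quotient f z = deriv (deriv f) z / (2 * deriv f z + z * deriv (deriv f) z)"

lemma class_C_Schwarz_quotient:
  assumes "f \<in> class_C" and "norm z < 1"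
  shows "2 * deriv f z + z * deriv (deriv f) z \<noteq> 0"
    and "norm (z * Schwarz_quotient f z) < 1"
proof -
  define p where "p = 1 + z * deriv (deriv f) z / deriv f z"
  have f'z: "deriv f z \<noteq> 0" and "Re p > 0"
    using assms by (auto simp: class_C_def unit_disc_def p_def)
  then have "p + 1 \<noteq> 0" by (auto simp: complex_eq_iff)
  have den: "2 * deriv f z + z * deriv (deriv f) z = deriv f z * (p + 1)"
    using f'z by (simp add: p_def field_simps)
  show "2 * deriv f z + z * deriv (deriv f) z \<noteq> 0"
    using den f'z \<open>p + 1 \<noteq> 0\<close> by simp
  have "p - 1 = z * deriv (deriv f) z / deriv f z" by (simp add: p_def)
  then have "z * Schwarz_quotient f z = (p - 1) / (p + 1)"
    by (simp add: Schwarz_quotient_def den divide_divide_eq_left)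
  then show "norm (z * Schwarz_quotient f z) < 1"
    using norm_Cayley_less_1[OF \<open>Re p > 0\<close>] by simp
qed

lemma taylor_coeff_2: "taylor_coeff f 2 = deriv (deriv f) 0 / 2"
  by (simp add: taylor_coeff_def numeral_2_eq_2)

lemma taylor_coeff_3: "taylor_coeff f 3 = deriv (deriv (deriv f)) 0 / 6"
  by (simp add: taylor_coeff_def numeral_3_eq_3 fact_Suc)

lemma Schwarz_quotient_at_0:
  assumes holf: "f holomorphic_on ball 0 1" and f'0: "deriv f 0 = 1"
  shows "Schwarz_quotient f 0 = taylor_coeff f 2"
    and "deriv (Schwarz_quotient f) 0 = 3 * (taylor_coeff f 3 - (taylor_coeff f 2)^2)"
proof -
  show "Schwarz_quotient f 0 = taylor_coeff f 2"
    by (simp add: Schwarz_quotient_def taylor_coeff_2 f'0)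
  have hol1: "deriv f holomorphic_on ball 0 1"
    by (intro holomorphic_deriv holf open_ball)
  have hol2: "deriv (deriv f) holomorphic_on ball 0 1"
    by (intro holomorphic_deriv hol1 open_ball)
  have "(deriv f has_field_derivative deriv (deriv f) 0) (at 0)"
    using hol1 by (intro holomorphic_derivI[of _ "ball 0 1"]) auto
  moreover have "(deriv (deriv f) has_field_derivative deriv (deriv (deriv f)) 0) (at 0)"
    using hol2 by (intro holomorphic_derivI[of _ "ball 0 1"]) auto
  ultimately have "(Schwarz_quotient f has_field_derivative
      (2 * deriv (deriv (deriv f)) 0 - 3 * (deriv (deriv f) 0)^2) / 4) (at 0)"
    unfolding Schwarz_quotient_def[abs_def]
    by (auto intro!: derivative_eq_intros simp: f'0 field_simps power2_eq_square)
  then show "deriv (Schwarz_quotient f) 0 = 3 * (taylor_coeff f 3 - (taylor_coeff f 2)^2)"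
    by (simp add: DERIV_imp_deriv taylor_coeff_2 taylor_coeff_3 field_simps power2_eq_square)
qed

lemma class_C_coeff_bound:
  assumes "f \<in> class_C"
  shows "3 * norm (taylor_coeff f 3 - (taylor_coeff f 2)^2) \<le> 1 - (norm (taylor_coeff f 2))^2"
proof -
  have holf: "f holomorphic_on ball 0 1" and f'0: "deriv f 0 = 1"
    using assms by (auto simp: class_C_def class_A_def unit_disc_def)
  have "Schwarz_quotient f holomorphic_on ball 0 1"
    unfolding Schwarz_quotient_def[abs_def] using class_C_Schwarz_quotient(1)[OF assms]
    by (intro holomorphic_intros holomorphic_deriv holf open_ball) auto
  from Schwarz_Pick_deriv_0_div_z[OF this class_C_Schwarz_quotient(2)[OF assms]]
  show ?thesis
    unfolding Schwarz_quotient_at_0[OF holf f'0] norm_mult by simp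
qed

lemma detT31_eq:
  "detT31 f = (1 - (norm (taylor_coeff f 2))^2)^2 - (norm (taylor_coeff f 3 - (taylor_coeff f 2)^2))^2"
  unfolding detT31_def Let_def cmod_power2 by (simp add: power2_eq_square algebra_simps)

lemma class_C_detT31_bounds:
  assumes "f \<in> class_C"
  shows "0 \<le> detT31 f \<and> detT31 f \<le> 1"
proof -
  define s where "s = 1 - (norm (taylor_coeff f 2))^2"
  define t where "t = norm (taylor_coeff f 3 - (taylor_coeff f 2)^2)"
  have "0 \<le> t" "3 * t \<le> s" "s \<le> 1"
    using class_C_coeff_bound[OF assms] by (auto simp: s_def t_def)
  then have "t^2 \<le> s^2" "s^2 \<le> 1"
    by (auto intro: power_mono simp: power_le_one)
  then show ?thesis
    unfolding detT31_eq s_def[symmetric] t_def[symmetric] using zero_le_power2[of t] by linarith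
qed

lemma has_field_derivative_const_div_one_minus_power:
  fixes z c :: complex
  assumes "z \<noteq> 1"
  shows "((\<lambda>w. c / (1 - w) ^ Suc k) has_field_derivative c * of_nat (Suc k) / (1 - z) ^ (k + 2)) (at z)"
proof -
  have u: "1 - z \<noteq> 0" using assms by simp
  have "((\<lambda>w. c / (1 - w) ^ Suc k) has_field_derivative
      (0 * (1 - z) ^ Suc k - c * (of_nat (Suc k) * ((0 - 1) * (1 - z) ^ (Suc k - Suc 0))))
        / ((1 - z) ^ Suc k * (1 - z) ^ Suc k)) (at z)"
    using u by (intro DERIV_divide DERIV_const DERIV_power DERIV_diff DERIV_ident) simp
  moreover have "(0 * u ^ Suc k - c * (of_nat (Suc k) * ((0 - 1) * u ^ (Suc k - Suc 0))))
        / (u ^ Suc k * u ^ Suc k) = c * of_nat (Suc k) / u ^ (k + 2)" if "u \<noteq> 0" for u :: complex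
    using that by (simp add: field_simps power_add power_Suc)
  ultimately show ?thesis using u by simp
qed

lemma higher_deriv_z_div_one_minus_z:
  fixes z :: complex
  assumes "z \<noteq> 1"
  shows "(deriv ^^ Suc n) (\<lambda>w. w / (1 - w)) z = fact (Suc n) / (1 - z) ^ (n + 2)"
  using assms
proof (induction n arbitrary: z)
  case 0
  have "((\<lambda>w. w / (1 - w)) has_field_derivative 1 / (1 - z) ^ 2) (at z)"
    using 0 by (auto intro!: derivative_eq_intros simp: field_simps power2_eq_square)
  then show ?case by (simp add: DERIV_imp_deriv power2_eq_square)
next
  case (Suc n)
  have "eventually (\<lambda>w. w \<in> - {1}) (nhds z)"
    using Suc.prems by (intro eventually_nhds_in_open) auto
  then have "eventually (\<lambda>w. (deriv ^^ Suc n) (\<lambda>w. w / (1 - w)) w = fact (Suc n) / (1 - w) ^ (n + 2)) (nhds z)"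
    by eventually_elim (use Suc.IH in auto)
  then have "(deriv ^^ Suc (Suc n)) (\<lambda>w. w / (1 - w)) z = deriv (\<lambda>w. fact (Suc n) / (1 - w) ^ Suc (Suc n)) z"
    by (simp only: funpow.simps(2) o_apply) (rule deriv_cong_ev, simp_all add: numeral_2_eq_2)
  also have "\<dots> = fact (Suc n) * of_nat (Suc (Suc n)) / (1 - z) ^ (Suc n + 2)"
    using has_field_derivative_const_div_one_minus_power[OF Suc.prems] by (rule DERIV_imp_deriv)
  also have "\<dots> = fact (Suc (Suc n)) / (1 - z) ^ (Suc n + 2)"
    by (simp add: algebra_simps)
  finally show ?case .
qed

lemma taylor_coeff_z_div_one_minus_z:
  "taylor_coeff (\<lambda>w. w / (1 - w)) (Suc n) = 1"
  by (simp add: taylor_coeff_def higher_deriv_z_div_one_minus_z del: funpow.simps fact_Suc)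

lemma z_div_one_minus_z_in_class_C: "(\<lambda>z::complex. z / (1 - z)) \<in> class_C"
proof -
  define f where "f = (\<lambda>z::complex. z / (1 - z))"
  have D1: "deriv f z = 1 / (1 - z)^2"
    and D2: "deriv (deriv f) z = 2 / (1 - z)^3" if "z \<noteq> 1" for z
    using higher_deriv_z_div_one_minus_z[OF that, of 0] higher_deriv_z_div_one_minus_z[OF that, of 1]
    by (simp_all add: f_def numeral_2_eq_2 numeral_3_eq_3)
  have "f holomorphic_on ball 0 1"
    unfolding f_def by (intro holomorphic_intros) auto
  moreover have "deriv f z \<noteq> 0 \<and> Re (1 + z * deriv (deriv f) z / deriv f z) > 0"
    if "norm z < 1" for z
  proof -
    have "z \<noteq> 1" using that by auto
    have "c * (2 / u^3) / (1 / u^2) = 2 * c / u" if "u \<noteq> 0" for c u :: complex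
      using that by (simp add: field_simps power2_eq_square power3_eq_cube)
    then have "1 + z * deriv (deriv f) z / deriv f z = 1 + 2 * z / (1 - z)"
      using \<open>z \<noteq> 1\<close> by (simp add: D1 D2)
    also have "\<dots> = (1 + z) / (1 - z)"
      using \<open>z \<noteq> 1\<close> by (simp add: field_simps)
    finally show ?thesis
      using Re_inverse_Cayley_pos[OF that] \<open>z \<noteq> 1\<close> by (simp add: D1)
  qed
  ultimately show ?thesis
    using D1[of 0] by (simp add: class_C_def class_A_def unit_disc_def f_def)
qed

theorem theorem3:
  shows "(\<forall>f\<in>class_C. 0 \<le> detT31 f \<and> detT31 f \<le> 1)
    \<and> (\<exists>f\<in>class_C. detT31 f = 0)
    \<and> (\<exists>f\<in>class_C. detT31 f = 1)"
proof -
  have "detT31 (\<lambda>z::complex. z / (1 - z)) = 0"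
    using taylor_coeff_z_div_one_minus_z[of 1] taylor_coeff_z_div_one_minus_z[of 2]
    by (simp add: detT31_def numeral_2_eq_2 numeral_3_eq_3)
  moreover have "(\<lambda>z::complex. z) \<in> class_C"
    by (simp add: class_C_def class_A_def unit_disc_def)
  moreover have "detT31 (\<lambda>z::complex. z) = 1"
    by (simp add: detT31_eq taylor_coeff_2 taylor_coeff_3)
  ultimately show ?thesis
    using class_C_detT31_bounds z_div_one_minus_z_in_class_C by blast
qed

end
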